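(* Let $N\geq 1$ be an integer and $\delta>0$. There is a constant $B=B(N,\delta)$ such that the following holds: if $q(x)=\prod_{i=1}^N(x-\mu_i)\in\mathbb{R}[x]$ is a monic reciprocal polynomial of degree $N$ whose roots $\mu=(\mu_1,\dots,\mu_N)$ satisfy $p_k(\mu)\leq\delta$ for all $1\leq k\leq N(N+1)$, then every coefficient of $q$ has absolute value at most $B$.
   Context: $p_k(\mu)=\sum_{i=1}^N\mu_i^k$ is the $k$-th power sum of the roots (a real number since $q$ has real coefficients). A polynomial $q$ of degree $N$ is reciprocal if $x^Nq(1/x)=\pm q(x)$, i.e. its coefficient sequence is palindromic up to sign. *)

theory Defs
  imports Complex_Main "HOL-Computational_Algebra.Polynomial"
begin

text \<open>A polynomial q of degree N is reciprocal if x^N q(1/x) = +q(x) or -q(x),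
  i.e. its coefficient sequence (of length N+1) is palindromic up to sign.\<close>
definition reciprocal_poly :: "real poly \<Rightarrow> bool" where
  "reciprocal_poly q \<longleftrightarrow>
     (\<forall>i\<le>degree q. coeff q (degree q - i) = coeff q i) \<or>
     (\<forall>i\<le>degree q. coeff q (degree q - i) = - coeff q i)"

definition power_sum :: "nat \<Rightarrow> (nat \<Rightarrow> complex) \<Rightarrow> nat \<Rightarrow> complex" where
  "power_sum N \<mu> k = (\<Sum>i<N. \<mu> i ^ k)"

end

theory Submission
  imports Defs
begin

text \<open>Scale the roots by their maximal modulus R, so that they lie in the closed unit disc with a
  root z on the unit circle, and the power sums are bounded above by \<open>\<eta> = \<delta>/R\<close>.  The Fejer kernel
  \<open>F\<^sub>K(w) = \<Sum>\<^bsub>|k|\<le>K\<^esub> (K+1-|k|) w\<^sup>k\<close> is nonnegative on the disc and equals \<open>(K+1)\<^sup>2\<close> at \<open>w = 1\<close>.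
  If z is real, summing \<open>F\<^sub>N\<close> over the squared roots gives \<open>N+1 \<le> 2N\<^sup>2\<eta>\<close>.  Otherwise \<open>z\<close> and
  \<open>z\<close>-bar are two roots with product 1, and summing \<open>F\<^sub>K\<close>, \<open>K = N(N+1)\<close>, over all pairwise products of
  roots (whose power sums are squares of power sums) again forces \<open>2N\<^sup>2\<eta> \<ge> 1\<close>.  Hence
  \<open>R \<le> max 1 (2N\<^sup>2\<delta>)\<close>, and the coefficients are bounded in terms of the roots.\<close>

definition geometric_sum :: "nat \<Rightarrow> complex \<Rightarrow> complex" where
  "geometric_sum L z = (\<Sum>t\<le>L. z ^ t)"

text \<open>On the unit circle this is the Fejer kernel \<open>\<Sum>\<^bsub>|k|\<le>K\<^esub> (K+1-|k|) z\<^sup>k\<close>.\<close>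
definition fejer :: "nat \<Rightarrow> complex \<Rightarrow> real" where
  "fejer K z = (real K + 1) + 2 * (\<Sum>k\<in>{1..K}. (real K + 1 - real k) * Re (z ^ k))"

lemma fejer_sum_of_squares:
  "fejer K z = (cmod (geometric_sum K z))\<^sup>2
     + (1 - (cmod z)\<^sup>2) * (\<Sum>L<K. (cmod (geometric_sum L z))\<^sup>2)"
proof (induction K)
  case 0
  then show ?case by (simp add: fejer_def geometric_sum_def)
next
  case (Suc K)
  have geometric_Suc: "geometric_sum (Suc K) z = 1 + z * geometric_sum K z"
    unfolding geometric_sum_def by (subst sum.atMost_Suc_shift) (simp add: sum_distrib_left)
  have shifted: "z * geometric_sum K z = (\<Sum>k\<in>{1..Suc K}. z ^ k)"
  proof -
    have "z * geometric_sum K z = (\<Sum>t\<le>K. z ^ Suc t)"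
      unfolding geometric_sum_def by (simp add: sum_distrib_left)
    also have "\<dots> = (\<Sum>k\<in>{Suc 0..Suc K}. z ^ k)"
      by (subst sum.shift_bounds_cl_Suc_ivl) (simp add: atMost_atLeast0)
    finally show ?thesis by simp
  qed
  have norm_one_plus: "(cmod (1 + w))\<^sup>2 = 1 + 2 * Re w + (cmod w)\<^sup>2" for w :: complex
    by (simp add: cmod_power2) (simp add: power2_eq_square algebra_simps)
  have weights_Suc: "(\<Sum>k\<in>{1..Suc K}. (real (Suc K) + 1 - real k) * Re (z ^ k))
      = (\<Sum>k\<in>{1..K}. (real K + 1 - real k) * Re (z ^ k)) + (\<Sum>k\<in>{1..Suc K}. Re (z ^ k))"
    by (simp add: sum.distrib[symmetric] sum.atLeast1_atMost_eq algebra_simps)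
  have fejer_Suc: "fejer (Suc K) z = fejer K z + 1 + 2 * Re (z * geometric_sum K z)"
    unfolding fejer_def weights_Suc shifted Re_sum by simp
  show ?case
    unfolding fejer_Suc Suc geometric_Suc norm_one_plus
    by (simp add: norm_mult power_mult_distrib algebra_simps)
qed

lemma fejer_nonneg:
  assumes "cmod z \<le> 1"
  shows "fejer K z \<ge> 0"
proof -
  have "(cmod z)\<^sup>2 \<le> 1" using assms by (simp add: power_le_one)
  then have "0 \<le> (1 - (cmod z)\<^sup>2) * (\<Sum>L<K. (cmod (geometric_sum L z))\<^sup>2)"
    by (intro mult_nonneg_nonneg sum_nonneg) auto
  then show ?thesis unfolding fejer_sum_of_squares by simp
qed

lemma fejer_one: "fejer K 1 = (real K + 1)\<^sup>2"
proof -
  have "geometric_sum K 1 = of_nat (Suc K)" by (simp add: geometric_sum_def)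
  then have "cmod (geometric_sum K 1) = real K + 1" by (simp only: norm_of_nat)
  then show ?thesis unfolding fejer_sum_of_squares by simp
qed

lemma sum_fejer:
  assumes "finite A"
  shows "(\<Sum>a\<in>A. fejer K (w a)) = real (card A) * (real K + 1)
     + 2 * (\<Sum>k\<in>{1..K}. (real K + 1 - real k) * Re (\<Sum>a\<in>A. w a ^ k))"
  unfolding fejer_def sum.distrib Re_sum
  by (simp add: sum_distrib_left sum_distrib_right sum.swap[of _ A] algebra_simps)

lemma card_ones_mult_fejer_le:
  assumes "finite A" and "S \<subseteq> A" and "\<forall>a\<in>A. cmod (w a) \<le> 1" and "\<forall>a\<in>S. w a = 1"
  shows "real (card S) * (real K + 1)\<^sup>2 \<le> real (card A) * (real K + 1)
     + 2 * (\<Sum>k\<in>{1..K}. (real K + 1 - real k) * Re (\<Sum>a\<in>A. w a ^ k))"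
proof -
  have "real (card S) * (real K + 1)\<^sup>2 = (\<Sum>a\<in>S. fejer K (w a))"
    using assms(4) by (simp add: fejer_one)
  also have "\<dots> \<le> (\<Sum>a\<in>A. fejer K (w a))"
    using assms(1-3) by (intro sum_mono2) (auto intro: fejer_nonneg)
  finally show ?thesis using sum_fejer[OF assms(1)] by simp
qed

lemma square_one_power_sums_bound:
  fixes z :: "nat \<Rightarrow> complex"
  assumes disc: "\<forall>i<N. cmod (z i) \<le> 1" and "i0 < N" and "(z i0)\<^sup>2 = 1"
    and sums: "\<forall>m. 1 \<le> m \<and> m \<le> 2 * N \<longrightarrow> Re (\<Sum>i<N. z i ^ m) \<le> \<eta>" and "\<eta> \<ge> 0"
  shows "real N + 1 \<le> 2 * (real N)\<^sup>2 * \<eta>"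
proof -
  let ?w = "\<lambda>i. z i ^ 2"
  have "real (card {i0}) * (real N + 1)\<^sup>2 \<le> real (card {..<N}) * (real N + 1)
      + 2 * (\<Sum>k\<in>{1..N}. (real N + 1 - real k) * Re (\<Sum>i<N. ?w i ^ k))"
    using assms(2,3) disc
    by (intro card_ones_mult_fejer_le) (auto simp: norm_power power_le_one)
  also have "(\<Sum>k\<in>{1..N}. (real N + 1 - real k) * Re (\<Sum>i<N. ?w i ^ k)) \<le> (\<Sum>k\<in>{1..N}. real N * \<eta>)"
  proof (rule sum_mono)
    fix k assume k: "k \<in> {1..N}"
    have "Re (\<Sum>i<N. ?w i ^ k) \<le> \<eta>" using sums k by (auto simp: power_mult[symmetric])
    then have "(real N + 1 - real k) * Re (\<Sum>i<N. ?w i ^ k) \<le> (real N + 1 - real k) * \<eta>"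
      using k by (intro mult_left_mono) auto
    also have "\<dots> \<le> real N * \<eta>" using k \<open>\<eta> \<ge> 0\<close> by (intro mult_right_mono) auto
    finally show "(real N + 1 - real k) * Re (\<Sum>i<N. ?w i ^ k) \<le> real N * \<eta>" .
  qed
  finally have "(real N + 1)\<^sup>2 \<le> real N * (real N + 1) + 2 * (real N * (real N * \<eta>))"
    by simp
  then show ?thesis by (simp add: power2_eq_square algebra_simps)
qed

lemma Re_square_le:
  fixes T :: complex
  assumes "Re T \<le> \<eta>" and "\<eta> \<ge> 0" and "cmod T \<le> n"
  shows "Re (T * T) \<le> n * (2 * \<eta> - Re T)"
proof -
  have "n \<ge> 0" using norm_ge_zero[of T] assms(3) by linarith
  have "Re (T * T) \<le> \<bar>Re T\<bar> * \<bar>Re T\<bar>" by simp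
  also have "\<dots> \<le> n * \<bar>Re T\<bar>"
    using abs_Re_le_cmod[of T] assms(3) by (intro mult_right_mono) auto
  also have "\<dots> \<le> n * (2 * \<eta> - Re T)"
    using assms \<open>n \<ge> 0\<close> by (intro mult_left_mono) (auto simp: abs_if)
  finally show ?thesis .
qed

text \<open>The power sums of the products \<open>z\<^sub>i z\<^sub>l\<close> are the squares \<open>T\<^sub>k\<^sup>2\<close> of the power sums of the \<open>z\<^sub>i\<close>;
  the Fejer bound over the \<open>z\<^sub>i\<close> themselves (with no point at 1) controls the linear term.\<close>
lemma inverse_pair_power_sums_bound:
  fixes z :: "nat \<Rightarrow> complex"
  assumes disc: "\<forall>i<N. cmod (z i) \<le> 1"
    and pair: "i0 < N" "j0 < N" "i0 \<noteq> j0" "z i0 * z j0 = 1"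
    and sums: "\<forall>m. 1 \<le> m \<and> m \<le> K \<longrightarrow> Re (\<Sum>i<N. z i ^ m) \<le> \<eta>" and "\<eta> \<ge> 0"
  shows "(real K + 1)\<^sup>2 \<le> (real N)\<^sup>2 * (real K + 1) + 2 * real N * \<eta> * (real K)\<^sup>2"
proof -
  define T where "T k = (\<Sum>i<N. z i ^ k)" for k
  define W where "W k = real K + 1 - real k" for k
  let ?pairs = "{..<N} \<times> {..<N}"
  have products_disc: "\<forall>a\<in>?pairs. cmod (case a of (i, l) \<Rightarrow> z i * z l) \<le> 1"
    using disc by (auto simp: norm_mult intro: mult_le_one)
  have products_power_sum: "(\<Sum>a\<in>?pairs. (case a of (i, l) \<Rightarrow> z i * z l) ^ k) = T k * T k" for k
    by (simp add: T_def sum_product sum.cartesian_product power_mult_distrib case_prod_beta)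
  have "real (card {(i0, j0), (j0, i0)}) * (real K + 1)\<^sup>2 \<le> real (card ?pairs) * (real K + 1)
      + 2 * (\<Sum>k\<in>{1..K}. W k * Re (\<Sum>a\<in>?pairs. (case a of (i, l) \<Rightarrow> z i * z l) ^ k))"
    unfolding W_def using pair products_disc
    by (intro card_ones_mult_fejer_le) (auto simp: mult.commute)
  then have products: "2 * (real K + 1)\<^sup>2 \<le> (real N)\<^sup>2 * (real K + 1) + 2 * (\<Sum>k\<in>{1..K}. W k * Re (T k * T k))"
    using pair(3) by (simp add: products_power_sum power2_eq_square)
  have "real (card {}) * (real K + 1)\<^sup>2 \<le> real (card {..<N}) * (real K + 1)
      + 2 * (\<Sum>k\<in>{1..K}. W k * Re (T k))"
    unfolding W_def T_def using disc card_ones_mult_fejer_le[of "{..<N}" "{}" z K] by auto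
  then have linear: "- (\<Sum>k\<in>{1..K}. W k * Re (T k)) \<le> real N * (real K + 1) / 2"
    by simp
  have "W k * Re (T k * T k) \<le> W k * (real N * (2 * \<eta> - Re (T k)))" if k: "k \<in> {1..K}" for k
  proof (rule mult_left_mono)
    have "cmod (T k) \<le> (\<Sum>i<N. cmod (z i ^ k))" unfolding T_def by (rule norm_sum)
    also have "\<dots> \<le> (\<Sum>i<N. 1)" using disc by (intro sum_mono) (auto simp: norm_power power_le_one)
    finally show "Re (T k * T k) \<le> real N * (2 * \<eta> - Re (T k))"
      using sums k \<open>\<eta> \<ge> 0\<close> by (intro Re_square_le) (auto simp: T_def)
  qed (use k in \<open>simp add: W_def\<close>)
  then have squares: "(\<Sum>k\<in>{1..K}. W k * Re (T k * T k))
      \<le> (\<Sum>k\<in>{1..K}. 2 * real N * \<eta> * W k) - real N * (\<Sum>k\<in>{1..K}. W k * Re (T k))"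
    by (subst sum_distrib_left, subst sum_subtractf[symmetric], intro sum_mono)
       (auto simp: algebra_simps)
  have "(\<Sum>k\<in>{1..K}. 2 * real N * \<eta> * W k) \<le> (\<Sum>k\<in>{1..K}. 2 * real N * \<eta> * real K)"
    using \<open>\<eta> \<ge> 0\<close> by (intro sum_mono mult_left_mono) (auto simp: W_def)
  also have "\<dots> = 2 * real N * \<eta> * (real K)\<^sup>2" by (simp add: power2_eq_square)
  finally have weights: "(\<Sum>k\<in>{1..K}. 2 * real N * \<eta> * W k) \<le> 2 * real N * \<eta> * (real K)\<^sup>2" .
  have "- (real N * (\<Sum>k\<in>{1..K}. W k * Re (T k))) \<le> (real N)\<^sup>2 * (real K + 1) / 2"
    using mult_left_mono[OF linear, of "real N"] by (simp add: power2_eq_square)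
  with squares weights products show ?thesis by linarith
qed

lemma unimodular_power_sums_bound:
  fixes z :: "nat \<Rightarrow> complex"
  assumes disc: "\<forall>i<N. cmod (z i) \<le> 1" and "i0 < N" and "cmod (z i0) = 1"
    and "j0 < N" and conj: "z j0 = cnj (z i0)"
    and sums: "\<forall>m. 1 \<le> m \<and> m \<le> N * (N + 1) \<longrightarrow> Re (\<Sum>i<N. z i ^ m) \<le> \<eta>" and "\<eta> \<ge> 0"
  shows "1 \<le> 2 * (real N)\<^sup>2 * \<eta>"
proof (rule ccontr)
  assume small: "\<not> 1 \<le> 2 * (real N)\<^sup>2 * \<eta>"
  have N_ge_1: "real N \<ge> 1" using \<open>i0 < N\<close> by simp
  have inverse: "z i0 * z j0 = 1"
    using \<open>cmod (z i0) = 1\<close> complex_norm_square[of "z i0"] conj by simp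
  show False
  proof (cases "j0 = i0")
    case True
    have "2 * N \<le> N * (N + 1)" using N_ge_1 by simp
    with sums have "\<forall>m. 1 \<le> m \<and> m \<le> 2 * N \<longrightarrow> Re (\<Sum>i<N. z i ^ m) \<le> \<eta>"
      using le_trans by blast
    then have "real N + 1 \<le> 2 * (real N)\<^sup>2 * \<eta>"
      using square_one_power_sums_bound[OF disc \<open>i0 < N\<close>] inverse True \<open>\<eta> \<ge> 0\<close>
      by (simp add: power2_eq_square)
    then show False using small by simp
  next
    case False
    define K where "K = real N * (real N + 1)"
    have "(K + 1)\<^sup>2 \<le> (real N)\<^sup>2 * (K + 1) + 2 * real N * \<eta> * K\<^sup>2"
      using inverse_pair_power_sums_bound[OF disc \<open>i0 < N\<close> \<open>j0 < N\<close>, of "N * (N + 1)"]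
        False inverse sums \<open>\<eta> \<ge> 0\<close>
      by (simp add: K_def algebra_simps)
    moreover have "2 * real N * \<eta> * K\<^sup>2 < real N * (real N + 1)\<^sup>2"
    proof -
      have "2 * real N * \<eta> * K\<^sup>2 = (2 * (real N)\<^sup>2 * \<eta>) * (real N * (real N + 1)\<^sup>2)"
        by (simp add: K_def power2_eq_square algebra_simps)
      also have "\<dots> < 1 * (real N * (real N + 1)\<^sup>2)"
        using small N_ge_1 by (intro mult_strict_right_mono) auto
      finally show ?thesis by simp
    qed
    ultimately show False using N_ge_1 by (simp add: K_def power2_eq_square algebra_simps)
  qed
qed

lemma real_poly_conjugate_root:
  fixes \<mu> :: "nat \<Rightarrow> complex"
  assumes "map_poly complex_of_real q = (\<Prod>i<N. [:- \<mu> i, 1:])" and "i < N"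
  obtains j where "j < N" and "\<mu> j = cnj (\<mu> i)"
proof -
  have real_coeffs: "\<And>n. coeff (\<Prod>i<N. [:- \<mu> i, 1:]) n \<in> \<real>"
    unfolding assms(1)[symmetric] by (simp add: coeff_map_poly)
  have "poly (\<Prod>i<N. [:- \<mu> i, 1:]) (\<mu> i) = 0"
    using assms(2) by (auto simp: poly_prod intro!: bexI[of _ i])
  then have "poly (\<Prod>i<N. [:- \<mu> i, 1:]) (cnj (\<mu> i)) = 0"
    using real_poly_cnj_root_iff[OF real_coeffs] by blast
  then show ?thesis using that by (auto simp: poly_prod)
qed

lemma roots_norm_le:
  fixes \<mu> :: "nat \<Rightarrow> complex"
  assumes "\<delta> \<ge> 0" and factors: "map_poly complex_of_real q = (\<Prod>i<N. [:- \<mu> i, 1:])"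
    and sums: "\<forall>k. 1 \<le> k \<and> k \<le> N * (N + 1) \<longrightarrow> Re (power_sum N \<mu> k) \<le> \<delta>"
    and "i < N"
  shows "cmod (\<mu> i) \<le> max 1 (2 * (real N)\<^sup>2 * \<delta>)"
proof (rule ccontr)
  define R where "R = Max ((\<lambda>i. cmod (\<mu> i)) ` {..<N})"
  have R_ge: "cmod (\<mu> l) \<le> R" if "l < N" for l
    unfolding R_def using that by (intro Max_ge) auto
  have "R \<in> (\<lambda>i. cmod (\<mu> i)) ` {..<N}"
    unfolding R_def using \<open>i < N\<close> by (intro Max_in) auto
  then obtain i0 where "i0 < N" and "cmod (\<mu> i0) = R" by auto
  assume "\<not> cmod (\<mu> i) \<le> max 1 (2 * (real N)\<^sup>2 * \<delta>)"
  then have large: "R > 1" "R > 2 * (real N)\<^sup>2 * \<delta>" using R_ge[OF \<open>i < N\<close>] by auto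
  define z where "z l = \<mu> l / complex_of_real R" for l
  obtain j0 where "j0 < N" and "\<mu> j0 = cnj (\<mu> i0)"
    using real_poly_conjugate_root[OF factors \<open>i0 < N\<close>] .
  have scaled_sums: "Re (\<Sum>l<N. z l ^ m) \<le> \<delta> / R" if m: "1 \<le> m" "m \<le> N * (N + 1)" for m
  proof -
    have "Re (\<Sum>l<N. z l ^ m) = Re (power_sum N \<mu> m) / R ^ m"
      by (simp add: z_def power_sum_def power_divide sum_divide_distrib Re_divide_of_real
          flip: of_real_power)
    also have "\<dots> \<le> \<delta> / R ^ m"
      using sums m large by (intro divide_right_mono) auto
    also have "\<dots> \<le> \<delta> / R"
      using \<open>\<delta> \<ge> 0\<close> large m by (intro divide_left_mono) (use power_increasing[of 1 m R] in auto)
    finally show ?thesis .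
  qed
  have "1 \<le> 2 * (real N)\<^sup>2 * (\<delta> / R)"
  proof (rule unimodular_power_sums_bound[OF _ \<open>i0 < N\<close> _ \<open>j0 < N\<close>])
    show "\<forall>l<N. cmod (z l) \<le> 1" using R_ge large by (simp add: z_def norm_divide)
    show "cmod (z i0) = 1" using \<open>cmod (\<mu> i0) = R\<close> large by (simp add: z_def norm_divide)
    show "z j0 = cnj (z i0)" using \<open>\<mu> j0 = cnj (\<mu> i0)\<close> by (simp add: z_def)
  qed (use scaled_sums \<open>\<delta> \<ge> 0\<close> large in auto)
  then show False using large by (simp add: field_simps)
qed

lemma norm_coeff_prod_linear_le:
  fixes a :: "'i \<Rightarrow> complex"
  assumes "finite A" and "\<forall>i\<in>A. cmod (a i) \<le> \<rho>" and "\<rho> \<ge> 0"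
  shows "cmod (coeff (\<Prod>i\<in>A. [:- a i, 1:]) j) \<le> (1 + \<rho>) ^ card A"
  using assms
proof (induction A arbitrary: j rule: finite_induct)
  case empty
  then show ?case by (simp add: coeff_1)
next
  case (insert x F)
  define P where "P = (\<Prod>i\<in>F. [:- a i, 1:])"
  have IH: "cmod (coeff P m) \<le> (1 + \<rho>) ^ card F" for m
    using insert by (simp add: P_def)
  have "cmod (coeff (\<Prod>i\<in>insert x F. [:- a i, 1:]) j)
      = cmod (- a x * coeff P j + coeff (pCons 0 P) j)"
    using insert by (simp add: P_def)
  also have "\<dots> \<le> cmod (a x) * cmod (coeff P j) + cmod (coeff (pCons 0 P) j)"
    by (rule order_trans[OF norm_triangle_ineq]) (simp add: norm_mult)
  also have "\<dots> \<le> \<rho> * (1 + \<rho>) ^ card F + (1 + \<rho>) ^ card F"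
    using insert IH by (intro add_mono mult_mono) (auto simp: coeff_pCons split: nat.split)
  also have "\<dots> = (1 + \<rho>) ^ card (insert x F)" using insert by (simp add: algebra_simps)
  finally show ?case .
qed

theorem lemma2p2:
  fixes N :: nat and \<delta> :: real
  assumes "N \<ge> 1" and "\<delta> > 0"
  shows "\<exists>B::real. \<forall>(q::real poly) (\<mu>::nat \<Rightarrow> complex).
           lead_coeff q = 1 \<longrightarrow> degree q = N \<longrightarrow> reciprocal_poly q \<longrightarrow>
           map_poly complex_of_real q = (\<Prod>i<N. [:- \<mu> i, 1:]) \<longrightarrow>
           (\<forall>k. 1 \<le> k \<and> k \<le> N * (N + 1) \<longrightarrow>
              Re (power_sum N \<mu> k) \<le> \<delta>) \<longrightarrow>
           (\<forall>i. \<bar>coeff q i\<bar> \<le> B)"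
proof (intro exI allI impI)
  fix q :: "real poly" and \<mu> :: "nat \<Rightarrow> complex" and i :: nat
  define \<rho> where "\<rho> = max 1 (2 * (real N)\<^sup>2 * \<delta>)"
  assume factors: "map_poly complex_of_real q = (\<Prod>i<N. [:- \<mu> i, 1:])"
    and sums: "\<forall>k. 1 \<le> k \<and> k \<le> N * (N + 1) \<longrightarrow> Re (power_sum N \<mu> k) \<le> \<delta>"
  have "\<bar>coeff q i\<bar> = cmod (coeff (map_poly complex_of_real q) i)"
    by (simp add: coeff_map_poly)
  also have "\<dots> \<le> (1 + \<rho>) ^ card {..<N}"
    unfolding factors using roots_norm_le[OF _ factors sums] \<open>\<delta> > 0\<close>
    by (intro norm_coeff_prod_linear_le) (auto simp: \<rho>_def)
  finally show "\<bar>coeff q i\<bar> \<le> (1 + max 1 (2 * (real N)\<^sup>2 * \<delta>)) ^ N"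
    by (simp add: \<rho>_def)
qed

end
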